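(* Let $\sigma\subseteq N_\mathbb{Q}$ be a strongly convex rational polyhedral cone, $\tau$ a $k$-dimensional regular face with primitive ray generators $p_1,\ldots,p_k$, $\{e_1^{(r)},e_2^{(r)}\}_{r=1}^k$ a set of Demazure roots of $\sigma$ compatible with $\tau$, and $\gamma$ a face of $\sigma$. Suppose that for each $r$ with $p_r\notin\gamma$ at least one of $e_1^{(r)},e_2^{(r)}$ lies in $\gamma^\perp$. Then the cone generated by $\gamma$ and $\{p_r: p_r\notin\gamma\}$ is a face of $\sigma$.
   Context: $N$ lattice, $M$ dual, $\langle\cdot,\cdot\rangle$ pairing. Regular face: primitive ray generators extend to a basis of $N$. Demazure root for a ray generator $p_i$ of $\sigma$: $e\in M$ with $\langle p_i,e\rangle=-1$ and $\langle p_j,e\rangle\ge0$ for all other ray generators $p_j$ of $\sigma$. Compatibility with $\tau$: $\langle p_s,e_1^{(r)}\rangle=\langle p_s,e_2^{(r)}\rangle=-\delta_{rs}$ for $r,s=1,\ldots,k$. *)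

theory Defs
  imports "HOL-Analysis.Analysis"
begin

text \<open>Lattice N = int^'n, dual lattice M = int^'n, N_Q = rat^'n.
  The rank n = CARD('n) is arbitrary (type variable).\<close>

definition ofv :: "int^'n \<Rightarrow> rat^'n" where
  "ofv p = (\<chi> i. of_int (p $ i))"

definition pairQ :: "rat^'n::finite \<Rightarrow> int^'n \<Rightarrow> rat" where
  "pairQ x u = (\<Sum>i\<in>UNIV. x $ i * of_int (u $ i))"

definition pairZ :: "int^'n::finite \<Rightarrow> int^'n \<Rightarrow> int" where
  "pairZ p u = (\<Sum>i\<in>UNIV. p $ i * u $ i)"

definition cone_hullQ :: "(rat^'n::finite) set \<Rightarrow> (rat^'n) set" where
  "cone_hullQ S = {\<Sum>v\<in>F. c v *s v | F c. finite F \<and> F \<subseteq> S \<and> (\<forall>v\<in>F. c v \<ge> 0)}"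

definition rational_polyhedral_cone :: "(rat^'n::finite) set \<Rightarrow> bool" where
  "rational_polyhedral_cone \<sigma> \<longleftrightarrow> (\<exists>G::(int^'n) set. finite G \<and> \<sigma> = cone_hullQ (ofv ` G))"

definition strongly_convex :: "(rat^'n::finite) set \<Rightarrow> bool" where
  "strongly_convex \<sigma> \<longleftrightarrow> \<sigma> \<inter> uminus ` \<sigma> = {0}"

definition is_face :: "(rat^'n::finite) set \<Rightarrow> (rat^'n) set \<Rightarrow> bool" where
  "is_face \<tau> \<sigma> \<longleftrightarrow> (\<exists>u::int^'n. (\<forall>x\<in>\<sigma>. pairQ x u \<ge> 0) \<and> \<tau> = {x\<in>\<sigma>. pairQ x u = 0})"

definition primitive :: "int^'n::finite \<Rightarrow> bool" where
  "primitive p \<longleftrightarrow> p \<noteq> 0 \<and> (\<forall>(k::int) q. p = k *s q \<longrightarrow> \<bar>k\<bar> = 1)"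

definition ray_gens :: "(rat^'n::finite) set \<Rightarrow> (int^'n) set" where
  "ray_gens \<sigma> = {p. primitive p \<and> is_face (cone_hullQ {ofv p}) \<sigma>}"

definition Z_basis :: "('n \<Rightarrow> int^'n) \<Rightarrow> bool" where
  "Z_basis f \<longleftrightarrow> (\<forall>x::int^'n::finite. \<exists>!c::'n \<Rightarrow> int. x = (\<Sum>i\<in>UNIV. c i *s f i))"

definition regular_face_with_gens :: "(rat^'n::finite) set \<Rightarrow> (rat^'n) set \<Rightarrow> nat \<Rightarrow> (nat \<Rightarrow> int^'n) \<Rightarrow> bool" where
  "regular_face_with_gens \<tau> \<sigma> k p \<longleftrightarrow>
     is_face \<tau> \<sigma> \<and> inj_on p {1..k} \<and> ray_gens \<tau> = p ` {1..k} \<and>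
     (\<exists>f :: 'n \<Rightarrow> int^'n. \<exists>\<iota> :: nat \<Rightarrow> 'n. Z_basis f \<and> inj_on \<iota> {1..k} \<and> (\<forall>r\<in>{1..k}. f (\<iota> r) = p r))"

definition demazure_root :: "(rat^'n::finite) set \<Rightarrow> int^'n \<Rightarrow> int^'n \<Rightarrow> bool" where
  "demazure_root \<sigma> p e \<longleftrightarrow> p \<in> ray_gens \<sigma> \<and> pairZ p e = -1 \<and>
     (\<forall>q\<in>ray_gens \<sigma>. q \<noteq> p \<longrightarrow> pairZ q e \<ge> 0)"

definition perp :: "(rat^'n::finite) set \<Rightarrow> (int^'n) set" where
  "perp \<gamma> = {e. \<forall>x\<in>\<gamma>. pairQ x e = 0}"

end

theory Submission
  imports Defs
begin

(* A strongly convex rational polyhedral cone is generated by its primitive ray generators: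
   after dropping redundant generators, each remaining one spans an exposed ray, as Gordan's
   alternative applied to the other generators, projected along it, shows.
   Write \<gamma> = \<sigma> \<inter> u\<^sup>\<perp> and, for each p_r outside \<gamma>, pick the root e_r lying in \<gamma>\<^sup>\<perp>.
   Then u' = u + \<Sum>_r <p_r, u> e_r vanishes on these p_r by compatibility, agrees with u
   on \<gamma>, and is at least u on every other ray generator by the root inequalities. So u' is
   nonnegative on \<sigma>, and its zeros among the ray generators lie in \<gamma> or among these p_r,
   whence \<sigma> \<inter> u'\<^sup>\<perp> is the cone generated by \<gamma> and these p_r. *)

section \<open>Gordan's alternative\<close>

lemma finite_sets_separable:
  fixes X Y :: "'a::linordered_field set"
  assumes "finite X" "finite Y" "\<forall>x\<in>X. \<forall>y\<in>Y. x < y"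
  shows "\<exists>z. (\<forall>x\<in>X. x < z) \<and> (\<forall>y\<in>Y. z < y)"
proof -
  consider "X = {}" | "Y = {}" | "X \<noteq> {}" "Y \<noteq> {}" by blast
  then show ?thesis
  proof cases
    case 1
    then show ?thesis using Min_le[OF assms(2)] by (intro exI[of _ "Min Y - 1"]) fastforce
  next
    case 2
    then show ?thesis using Max_ge[OF assms(1)] by (intro exI[of _ "Max X + 1"]) fastforce
  next
    case 3
    then have "Max X < Min Y" using assms by auto
    then show ?thesis using assms(1,2) 3
      by (metis Max_less_iff Min_gr_iff gt_half_sum less_half_sum)
  qed
qed

definition fourier_motzkin :: "'j \<Rightarrow> ('j \<Rightarrow> 'a::linordered_field) set \<Rightarrow> ('j \<Rightarrow> 'a) set" where
  "fourier_motzkin j A = {a\<in>A. a j = 0} \<union>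
     (\<lambda>(a, b) i. - b j * a i + a j * b i) ` ({a\<in>A. 0 < a j} \<times> {b\<in>A. b j < 0})"

lemma finite_fourier_motzkin: "finite A \<Longrightarrow> finite (fourier_motzkin j A)"
  by (simp add: fourier_motzkin_def)

lemma fourier_motzkin_eliminates: "b \<in> fourier_motzkin j A \<Longrightarrow> b j = 0"
  by (auto simp: fourier_motzkin_def)

lemma fourier_motzkin_separates:
  fixes A :: "('j \<Rightarrow> 'a::linordered_field) set"
  assumes pos: "\<forall>b\<in>fourier_motzkin j A. 0 < (\<Sum>i\<in>J. b i * v i)"
    and "a \<in> A" "0 < a j" "b \<in> A" "b j < 0"
  shows "- (\<Sum>i\<in>J. a i * v i) / a j < - (\<Sum>i\<in>J. b i * v i) / b j"
proof -
  have "(\<lambda>i. - b j * a i + a j * b i) \<in> fourier_motzkin j A"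
    using assms(2-5) unfolding fourier_motzkin_def by (intro UnI2 image_eqI[where x = "(a, b)"]) auto
  from pos[rule_format, OF this] have "0 < (\<Sum>i\<in>J. (- b j * a i + a j * b i) * v i)" .
  also have "\<dots> = - b j * (\<Sum>i\<in>J. a i * v i) + a j * (\<Sum>i\<in>J. b i * v i)"
    unfolding sum_distrib_left sum.distrib[symmetric] by (rule sum.cong) (simp_all add: algebra_simps)
  finally show ?thesis using assms(3,5) by (simp add: divide_less_eq less_divide_eq algebra_simps)
qed

lemma fourier_motzkin_lift_positive:
  fixes A :: "('j \<Rightarrow> 'a::linordered_field) set"
  assumes "finite A" "finite J" "j \<notin> J" and pos: "\<forall>b\<in>fourier_motzkin j A. 0 < (\<Sum>i\<in>J. b i * v i)"
  shows "\<exists>v'. \<forall>a\<in>A. 0 < (\<Sum>i\<in>insert j J. a i * v' i)"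
proof -
  define s where "s a = (\<Sum>i\<in>J. a i * v i)" for a :: "'j \<Rightarrow> 'a"
  let ?P = "{a\<in>A. 0 < a j}" and ?N = "{b\<in>A. b j < 0}"
  have sep: "- s a / a j < - s b / b j" if "a \<in> ?P" "b \<in> ?N" for a b
    using fourier_motzkin_separates[OF pos] that by (simp add: s_def)
  have "\<exists>z. (\<forall>x\<in>(\<lambda>a. - s a / a j) ` ?P. x < z) \<and> (\<forall>y\<in>(\<lambda>b. - s b / b j) ` ?N. z < y)"
    by (rule finite_sets_separable) (use assms(1) sep in auto)
  then obtain z where z: "\<forall>a\<in>?P. - s a / a j < z" "\<forall>b\<in>?N. z < - s b / b j"
    by blast
  have "0 < (\<Sum>i\<in>insert j J. a i * (v(j := z)) i)" if "a \<in> A" for a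
  proof -
    have "(\<Sum>i\<in>J. a i * (v(j := z)) i) = s a"
      unfolding s_def by (rule sum.cong) (use assms(3) in auto)
    then have sum_eq: "(\<Sum>i\<in>insert j J. a i * (v(j := z)) i) = a j * z + s a"
      using assms(2,3) by simp
    consider "a j = 0" | "0 < a j" | "a j < 0" by linarith
    then show ?thesis
    proof cases
      case 1
      then have "a \<in> fourier_motzkin j A" using that by (simp add: fourier_motzkin_def)
      then have "0 < s a" using pos by (simp add: s_def)
      then show ?thesis unfolding sum_eq 1 by simp
    next
      case 2
      moreover have "- s a / a j < z" using z(1) that 2 by blast
      ultimately have "- s a < z * a j" using pos_divide_less_eq by blast
      then show ?thesis unfolding sum_eq by (simp add: algebra_simps)
    next
      case 3
      moreover have "z < - s a / a j" using z(2) that 3 by blast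
      ultimately have "- s a < z * a j" using neg_less_divide_eq by blast
      then show ?thesis unfolding sum_eq by (simp add: algebra_simps)
    qed
  qed
  then show ?thesis by blast
qed

lemma fourier_motzkin_nonneg_combination:
  fixes A :: "('j \<Rightarrow> 'a::linordered_field) set"
  assumes "finite A" "b \<in> fourier_motzkin j A"
  shows "\<exists>w. (\<forall>a\<in>A. 0 \<le> w a) \<and> (\<exists>a\<in>A. 0 < w a) \<and> (\<forall>i. b i = (\<Sum>a\<in>A. w a * a i))"
proof (cases "b \<in> A")
  case True
  then show ?thesis using assms(1)
    by (intro exI[of _ "\<lambda>x. if x = b then 1 else 0"]) (auto simp: mult_delta_left)
next
  case False
  then obtain a a' where a: "a \<in> A" "0 < a j" and a': "a' \<in> A" "a' j < 0"
    and b: "b = (\<lambda>i. - a' j * a i + a j * a' i)"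
    using assms(2) by (auto simp: fourier_motzkin_def)
  define w where "w x = (if x = a then - a' j else 0) + (if x = a' then a j else 0)" for x
  have "a \<noteq> a'" using a a' by auto
  have "(\<Sum>x\<in>A. w x * x i) = - a' j * a i + a j * a' i" for i
  proof -
    have "(\<Sum>x\<in>A. w x * x i) =
          (\<Sum>x\<in>A. (if x = a then - a' j * x i else 0) + (if x = a' then a j * x i else 0))"
      by (rule sum.cong) (auto simp: w_def)
    also have "\<dots> = - a' j * a i + a j * a' i"
      using assms(1) a(1) a'(1) by (simp add: sum.distrib)
    finally show ?thesis .
  qed
  moreover have "\<forall>x\<in>A. 0 \<le> w x" "0 < w a" using a a' \<open>a \<noteq> a'\<close> by (auto simp: w_def)
  ultimately show ?thesis using a(1) b by auto
qed

lemma nonneg_dependence_transfer: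
  fixes A B :: "('j \<Rightarrow> 'a::linordered_field) set"
  assumes "finite A" "finite B"
    and comb: "\<forall>b\<in>B. \<exists>w. (\<forall>a\<in>A. 0 \<le> w a) \<and> (\<exists>a\<in>A. 0 < w a) \<and> (\<forall>i. b i = (\<Sum>a\<in>A. w a * a i))"
    and l: "\<forall>b\<in>B. 0 \<le> l b" "\<exists>b\<in>B. 0 < l b"
  shows "\<exists>\<mu>. (\<forall>a\<in>A. 0 \<le> \<mu> a) \<and> (\<exists>a\<in>A. 0 < \<mu> a) \<and>
           (\<forall>i. (\<Sum>a\<in>A. \<mu> a * a i) = (\<Sum>b\<in>B. l b * b i))"
proof -
  from bchoice[OF comb] obtain w where
    "\<forall>b\<in>B. (\<forall>a\<in>A. 0 \<le> w b a) \<and> (\<exists>a\<in>A. 0 < w b a) \<and> (\<forall>i. b i = (\<Sum>a\<in>A. w b a * a i))"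
    by blast
  then have w0: "\<And>b a. b \<in> B \<Longrightarrow> a \<in> A \<Longrightarrow> 0 \<le> w b a"
    and wpos: "\<And>b. b \<in> B \<Longrightarrow> \<exists>a\<in>A. 0 < w b a"
    and wrep: "\<And>b i. b \<in> B \<Longrightarrow> b i = (\<Sum>a\<in>A. w b a * a i)"
    by blast+
  define \<mu> where "\<mu> a = (\<Sum>b\<in>B. l b * w b a)" for a
  have "\<forall>a\<in>A. 0 \<le> \<mu> a" unfolding \<mu>_def using l(1) w0 by (auto intro!: sum_nonneg)
  moreover have "\<exists>a\<in>A. 0 < \<mu> a"
  proof -
    obtain b a where b: "b \<in> B" "0 < l b" and a: "a \<in> A" "0 < w b a" using l(2) wpos by blast
    have "l b * w b a \<le> \<mu> a" unfolding \<mu>_def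
      using assms(2) b a l(1) w0 by (intro member_le_sum) auto
    moreover have "0 < l b * w b a" using a b by simp
    ultimately have "0 < \<mu> a" by linarith
    then show ?thesis using a(1) by blast
  qed
  moreover have "(\<Sum>a\<in>A. \<mu> a * a i) = (\<Sum>b\<in>B. l b * b i)" for i
  proof -
    have "(\<Sum>a\<in>A. \<mu> a * a i) = (\<Sum>b\<in>B. l b * (\<Sum>a\<in>A. w b a * a i))"
      unfolding \<mu>_def sum_distrib_right sum_distrib_left mult.assoc by (rule sum.swap)
    also have "\<dots> = (\<Sum>b\<in>B. l b * b i)" using wrep by simp
    finally show ?thesis .
  qed
  ultimately show ?thesis by blast
qed

lemma gordan_alternative:
  fixes A :: "('j \<Rightarrow> 'a::linordered_field) set"
  assumes "finite J" "finite A"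
  shows "(\<exists>v. \<forall>a\<in>A. 0 < (\<Sum>i\<in>J. a i * v i)) \<or>
         (\<exists>l. (\<forall>a\<in>A. 0 \<le> l a) \<and> (\<exists>a\<in>A. 0 < l a) \<and> (\<forall>i\<in>J. (\<Sum>a\<in>A. l a * a i) = 0))"
  using assms
proof (induction J arbitrary: A rule: finite_induct)
  case empty
  then show ?case by (cases "A = {}") (auto intro!: exI[of _ "\<lambda>_. 1"])
next
  case (insert j J)
  have fin: "finite (fourier_motzkin j A)" using insert.prems by (rule finite_fourier_motzkin)
  from insert.IH[OF fin] show ?case
  proof
    assume "\<exists>v. \<forall>b\<in>fourier_motzkin j A. 0 < (\<Sum>i\<in>J. b i * v i)"
    then show ?case using fourier_motzkin_lift_positive[OF insert.prems insert.hyps] by blast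
  next
    assume "\<exists>l. (\<forall>b\<in>fourier_motzkin j A. 0 \<le> l b) \<and> (\<exists>b\<in>fourier_motzkin j A. 0 < l b) \<and>
              (\<forall>i\<in>J. (\<Sum>b\<in>fourier_motzkin j A. l b * b i) = 0)"
    then obtain l where l: "\<forall>b\<in>fourier_motzkin j A. 0 \<le> l b" "\<exists>b\<in>fourier_motzkin j A. 0 < l b"
      and dep: "\<forall>i\<in>J. (\<Sum>b\<in>fourier_motzkin j A. l b * b i) = 0" by blast
    obtain \<mu> where "\<forall>a\<in>A. 0 \<le> \<mu> a" "\<exists>a\<in>A. 0 < \<mu> a"
      and \<mu>: "\<forall>i. (\<Sum>a\<in>A. \<mu> a * a i) = (\<Sum>b\<in>fourier_motzkin j A. l b * b i)"
      using nonneg_dependence_transfer[OF insert.prems fin _ l]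
        fourier_motzkin_nonneg_combination[OF insert.prems] by blast
    moreover have "\<forall>i\<in>insert j J. (\<Sum>a\<in>A. \<mu> a * a i) = 0"
      using dep by (simp add: \<mu> fourier_motzkin_eliminates)
    ultimately show ?case by blast
  qed
qed

lemma nonneg_dependence_reindex:
  fixes a :: "'k \<Rightarrow> 'j \<Rightarrow> 'a::linordered_field"
  assumes "finite K" and l: "\<forall>b\<in>a ` K. 0 \<le> l b" "\<exists>b\<in>a ` K. 0 < l b"
  shows "\<exists>l'. (\<forall>k\<in>K. 0 \<le> l' k) \<and> (\<exists>k\<in>K. 0 < l' k) \<and>
           (\<forall>i. (\<Sum>k\<in>K. l' k * a k i) = (\<Sum>b\<in>a ` K. l b * b i))"
proof -
  \<comment> \<open>Spread the weight of each vector evenly over the indices representing it.\<close>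
  define m where "m k = card {k'\<in>K. a k' = a k}" for k
  have m: "0 < m k" if "k \<in> K" for k
    unfolding m_def using assms(1) that by (auto simp: card_gt_0_iff)
  define l' where "l' k = l (a k) / of_nat (m k)" for k
  have "(\<Sum>k\<in>K. l' k * a k i) = (\<Sum>b\<in>a ` K. l b * b i)" for i
  proof -
    have "(\<Sum>k\<in>K. l' k * a k i) = (\<Sum>b\<in>a ` K. \<Sum>k\<in>{k\<in>K. a k = b}. l' k * a k i)"
      using assms(1) by (rule sum.image_gen)
    also have "\<dots> = (\<Sum>b\<in>a ` K. l b * b i)"
    proof (rule sum.cong[OF refl])
      fix b assume "b \<in> a ` K"
      then obtain k0 where k0: "k0 \<in> K" "b = a k0" by blast
      have "l' k * a k i = l b / of_nat (m k0) * b i" if "k \<in> {k\<in>K. a k = b}" for k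
        using that by (simp add: l'_def m_def k0)
      then have "(\<Sum>k\<in>{k\<in>K. a k = b}. l' k * a k i) = of_nat (m k0) * (l b / of_nat (m k0) * b i)"
        by (simp add: m_def k0)
      also have "\<dots> = l b * b i"
        using m[OF k0(1)] by simp
      finally show "(\<Sum>k\<in>{k\<in>K. a k = b}. l' k * a k i) = l b * b i" .
    qed
    finally show ?thesis .
  qed
  moreover have "\<forall>k\<in>K. 0 \<le> l' k" using l(1) by (simp add: l'_def)
  moreover have "\<exists>k\<in>K. 0 < l' k"
  proof -
    obtain k where k: "k \<in> K" "0 < l (a k)" using l(2) by blast
    then have "0 < l' k" using m[OF k(1)] by (simp add: l'_def)
    then show ?thesis using k(1) by blast
  qed
  ultimately show ?thesis by blast
qed

lemma gordan_alternative_indexed: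
  fixes a :: "'k \<Rightarrow> 'j \<Rightarrow> 'a::linordered_field"
  assumes "finite J" "finite K"
  shows "(\<exists>v. \<forall>k\<in>K. 0 < (\<Sum>i\<in>J. a k i * v i)) \<or>
         (\<exists>l. (\<forall>k\<in>K. 0 \<le> l k) \<and> (\<exists>k\<in>K. 0 < l k) \<and> (\<forall>i\<in>J. (\<Sum>k\<in>K. l k * a k i) = 0))"
proof -
  from gordan_alternative[OF assms(1) finite_imageI[OF assms(2)]] show ?thesis
  proof
    assume "\<exists>v. \<forall>b\<in>a ` K. 0 < (\<Sum>i\<in>J. b i * v i)"
    then show ?thesis by blast
  next
    assume "\<exists>l. (\<forall>b\<in>a ` K. 0 \<le> l b) \<and> (\<exists>b\<in>a ` K. 0 < l b) \<and> (\<forall>i\<in>J. (\<Sum>b\<in>a ` K. l b * b i) = 0)"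
    then obtain l where l: "\<forall>b\<in>a ` K. 0 \<le> l b" "\<exists>b\<in>a ` K. 0 < l b"
      and dep: "\<forall>i\<in>J. (\<Sum>b\<in>a ` K. l b * b i) = 0" by blast
    from nonneg_dependence_reindex[OF assms(2) l] dep show ?thesis by auto
  qed
qed

lemma cone_hullQ_elim:
  assumes "x \<in> cone_hullQ S"
  obtains F c where "x = (\<Sum>v\<in>F. c v *s v)" "finite F" "F \<subseteq> S" "\<forall>v\<in>F. 0 \<le> c v"
  using assms unfolding cone_hullQ_def by blast

lemma zero_in_cone_hullQ: "0 \<in> cone_hullQ S"
  unfolding cone_hullQ_def by (auto intro!: exI[of _ "{}"])

lemma cone_hullQ_inc: "v \<in> S \<Longrightarrow> v \<in> cone_hullQ S"
  unfolding cone_hullQ_def by (auto intro!: exI[of _ "{v}"] exI[of _ "\<lambda>_. 1"])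

lemma cone_hullQ_smult:
  assumes "x \<in> cone_hullQ S" "0 \<le> t"
  shows "t *s x \<in> cone_hullQ S"
proof -
  obtain F c where x: "x = (\<Sum>v\<in>F. c v *s v)" "finite F" "F \<subseteq> S" "\<forall>v\<in>F. 0 \<le> c v"
    using assms(1) by (rule cone_hullQ_elim)
  have "t *s x = (\<Sum>v\<in>F. (t * c v) *s v)"
    unfolding x(1) by (simp add: vec_eq_iff sum_distrib_left mult.assoc)
  then show ?thesis unfolding cone_hullQ_def using x assms(2) by (auto intro!: exI[of _ F])
qed

lemma cone_hullQ_add:
  assumes "x \<in> cone_hullQ S" "y \<in> cone_hullQ S"
  shows "x + y \<in> cone_hullQ S"
proof -
  obtain F c where x: "x = (\<Sum>v\<in>F. c v *s v)" "finite F" "F \<subseteq> S" "\<forall>v\<in>F. 0 \<le> c v"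
    using assms(1) by (rule cone_hullQ_elim)
  obtain G d where y: "y = (\<Sum>v\<in>G. d v *s v)" "finite G" "G \<subseteq> S" "\<forall>v\<in>G. 0 \<le> d v"
    using assms(2) by (rule cone_hullQ_elim)
  define c' where "c' v = (if v \<in> F then c v else 0)" for v
  define d' where "d' v = (if v \<in> G then d v else 0)" for v
  have "x = (\<Sum>v\<in>F \<union> G. c' v *s v)"
    unfolding x(1) c'_def using x(2) y(2) by (intro sum.mono_neutral_cong_left) auto
  moreover have "y = (\<Sum>v\<in>F \<union> G. d' v *s v)"
    unfolding y(1) d'_def using x(2) y(2) by (intro sum.mono_neutral_cong_left) auto
  ultimately have "x + y = (\<Sum>v\<in>F \<union> G. (c' v + d' v) *s v)"
    by (simp add: vector_sadd_rdistrib sum.distrib)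
  moreover have "\<forall>v\<in>F \<union> G. 0 \<le> c' v + d' v" using x(4) y(4) by (auto simp: c'_def d'_def)
  ultimately show ?thesis unfolding cone_hullQ_def using x(2,3) y(2,3)
    by (intro CollectI exI[of _ "F \<union> G"] exI[of _ "\<lambda>v. c' v + d' v"]) auto
qed

lemma cone_hullQ_sum:
  "finite I \<Longrightarrow> (\<And>i. i \<in> I \<Longrightarrow> f i \<in> cone_hullQ S) \<Longrightarrow> (\<Sum>i\<in>I. f i) \<in> cone_hullQ S"
  by (induction I rule: finite_induct) (auto simp: zero_in_cone_hullQ cone_hullQ_add)

lemma cone_hullQ_minimal:
  assumes "T \<subseteq> cone_hullQ S"
  shows "cone_hullQ T \<subseteq> cone_hullQ S"
proof
  fix x assume "x \<in> cone_hullQ T"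
  then obtain F c where x: "x = (\<Sum>v\<in>F. c v *s v)" "finite F" "F \<subseteq> T" "\<forall>v\<in>F. 0 \<le> c v"
    by (rule cone_hullQ_elim)
  show "x \<in> cone_hullQ S"
    unfolding x(1) using x assms by (intro cone_hullQ_sum cone_hullQ_smult) auto
qed

lemma cone_hullQ_mono: "S \<subseteq> T \<Longrightarrow> cone_hullQ S \<subseteq> cone_hullQ T"
  by (rule cone_hullQ_minimal) (auto intro: cone_hullQ_inc)

lemma pairQ_add_left: "pairQ (x + y) u = pairQ x u + pairQ y u"
  by (simp add: pairQ_def distrib_right sum.distrib)

lemma pairQ_smult_left: "pairQ (t *s x) u = t * pairQ x u"
  by (simp add: pairQ_def sum_distrib_left mult.assoc)

lemma pairQ_sum_left: "finite F \<Longrightarrow> pairQ (\<Sum>i\<in>F. f i) u = (\<Sum>i\<in>F. pairQ (f i) u)"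
  by (induction F rule: finite_induct) (simp_all add: pairQ_add_left pairQ_def[of 0])

lemma pairQ_add_right: "pairQ x (u + u') = pairQ x u + pairQ x u'"
  by (simp add: pairQ_def distrib_left sum.distrib)

lemma pairQ_smult_right: "pairQ x (t *s u) = of_int t * pairQ x u"
  by (simp add: pairQ_def sum_distrib_left algebra_simps)

lemma pairQ_sum_right: "finite F \<Longrightarrow> pairQ x (\<Sum>i\<in>F. f i) = (\<Sum>i\<in>F. pairQ x (f i))"
  by (induction F rule: finite_induct) (simp_all add: pairQ_add_right pairQ_def[of _ 0])

lemma pairQ_ofv: "pairQ (ofv p) u = of_int (pairZ p u)"
  by (simp add: pairQ_def pairZ_def ofv_def)

lemma pairQ_cone_hullQ_nonneg:
  assumes "x \<in> cone_hullQ S" "\<forall>v\<in>S. 0 \<le> pairQ v u"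
  shows "0 \<le> pairQ x u"
proof -
  obtain F c where x: "x = (\<Sum>v\<in>F. c v *s v)" "finite F" "F \<subseteq> S" "\<forall>v\<in>F. 0 \<le> c v"
    using assms(1) by (rule cone_hullQ_elim)
  show ?thesis unfolding x(1) using x assms(2)
    by (auto simp: pairQ_sum_left pairQ_smult_left intro!: sum_nonneg)
qed

lemma pairQ_cone_hullQ_zero:
  assumes "x \<in> cone_hullQ S" "\<forall>v\<in>S. pairQ v u = 0"
  shows "pairQ x u = 0"
proof -
  obtain F c where x: "x = (\<Sum>v\<in>F. c v *s v)" "finite F" "F \<subseteq> S" "\<forall>v\<in>F. 0 \<le> c v"
    using assms(1) by (rule cone_hullQ_elim)
  show ?thesis unfolding x(1) using x assms(2)
    by (auto simp: pairQ_sum_left pairQ_smult_left intro!: sum.neutral)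
qed

lemma cone_hullQ_inter_hyperplane:
  assumes "\<forall>w\<in>W. 0 \<le> pairQ w u"
  shows "{x\<in>cone_hullQ W. pairQ x u = 0} = cone_hullQ {w\<in>W. pairQ w u = 0}"
proof
  show "{x\<in>cone_hullQ W. pairQ x u = 0} \<subseteq> cone_hullQ {w\<in>W. pairQ w u = 0}"
  proof clarify
    fix x assume xW: "x \<in> cone_hullQ W" and x0: "pairQ x u = 0"
    from xW obtain F c where x: "x = (\<Sum>v\<in>F. c v *s v)" "finite F" "F \<subseteq> W" "\<forall>v\<in>F. 0 \<le> c v"
      by (rule cone_hullQ_elim)
    have nonneg: "\<And>v. v \<in> F \<Longrightarrow> 0 \<le> c v * pairQ v u" using x(3,4) assms by auto
    have "(\<Sum>v\<in>F. c v * pairQ v u) = 0" using x0 x(1,2) by (simp add: pairQ_sum_left pairQ_smult_left)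
    then have "\<forall>v\<in>F. c v * pairQ v u = 0" using sum_nonneg_eq_0_iff[OF x(2) nonneg] by simp
    then have "x = (\<Sum>v\<in>{v\<in>F. pairQ v u = 0}. c v *s v)"
      unfolding x(1) using x(2) by (intro sum.mono_neutral_right) auto
    then show "x \<in> cone_hullQ {w\<in>W. pairQ w u = 0}"
      unfolding cone_hullQ_def using x by (auto intro!: exI[of _ "{v\<in>F. pairQ v u = 0}"])
  qed
  show "cone_hullQ {w\<in>W. pairQ w u = 0} \<subseteq> {x\<in>cone_hullQ W. pairQ x u = 0}"
    using cone_hullQ_mono[of "{w\<in>W. pairQ w u = 0}" W] pairQ_cone_hullQ_zero by blast
qed

lemma is_face_cone_hullQ_between:
  assumes nonneg: "\<forall>w\<in>W. 0 \<le> pairQ w u"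
    and lower: "{w\<in>W. pairQ w u = 0} \<subseteq> cone_hullQ S"
    and upper: "S \<subseteq> {x\<in>cone_hullQ W. pairQ x u = 0}"
  shows "is_face (cone_hullQ S) (cone_hullQ W)"
proof -
  have "cone_hullQ S = {x\<in>cone_hullQ W. pairQ x u = 0}"
    using cone_hullQ_minimal[OF lower] cone_hullQ_minimal[of S "{w\<in>W. pairQ w u = 0}"] upper
    unfolding cone_hullQ_inter_hyperplane[OF nonneg] by blast
  moreover have "\<forall>x\<in>cone_hullQ W. 0 \<le> pairQ x u" using nonneg pairQ_cone_hullQ_nonneg by blast
  ultimately show ?thesis unfolding is_face_def by blast
qed

lemma ofv_smult: "ofv (m *s p) = of_int m *s ofv p"
  by (simp add: ofv_def vec_eq_iff)

lemma ofv_eq_0_iff: "ofv g = 0 \<longleftrightarrow> g = 0"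
  by (simp add: ofv_def vec_eq_iff)

lemma lattice_multiple_of_functional:
  fixes v :: "'n::finite \<Rightarrow> rat"
  obtains d :: int and u :: "int^'n" where "0 < d" "\<And>x. pairQ x u = of_int d * (\<Sum>i\<in>UNIV. x $ i * v i)"
proof -
  define a where "a i = fst (quotient_of (v i))" for i
  define b where "b i = snd (quotient_of (v i))" for i
  have b: "0 < b i" for i
    unfolding b_def using quotient_of_denom_pos by (metis prod.collapse)
  have v: "v i = of_int (a i) / of_int (b i)" for i
    unfolding a_def b_def using quotient_of_div by (metis prod.collapse)
  define d where "d = (\<Prod>i\<in>UNIV. b i)"
  have "b i dvd d" for i unfolding d_def by (rule dvd_prodI) auto
  then obtain q where q: "\<And>i. d = b i * q i" unfolding dvd_def by metis
  define u :: "int^'n" where "u = (\<chi> i. q i * a i)"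
  have "of_int (u $ i) = of_int d * v i" for i
    using b[of i] by (simp add: u_def v q[of i])
  then have "pairQ x u = of_int d * (\<Sum>i\<in>UNIV. x $ i * v i)" for x
    by (simp add: pairQ_def sum_distrib_left algebra_simps)
  moreover have "0 < d" unfolding d_def using b by (simp add: prod_pos)
  ultimately show ?thesis using that by blast
qed

lemma nonzero_lattice_vector_primitive_multiple:
  fixes g :: "int^'n::finite"
  assumes "g \<noteq> 0"
  obtains m p where "0 < m" "g = m *s p" "primitive p"
proof -
  obtain j where j: "g $ j \<noteq> 0" using assms by (auto simp: vec_eq_iff)
  define M where "M = {m::nat. 0 < m \<and> (\<exists>q. g = int m *s q)}"
  have M: "m \<in> M \<longleftrightarrow> 0 < m \<and> (\<exists>q. g = int m *s q)" for m by (simp add: M_def)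
  have "M \<subseteq> {..nat \<bar>g $ j\<bar>}"
  proof
    fix m assume "m \<in> M"
    then obtain q where "0 < m" "g = int m *s q" by (auto simp: M)
    then have "g $ j = int m * q $ j" by simp
    with j have "q $ j \<noteq> 0" "\<bar>g $ j\<bar> = int m * \<bar>q $ j\<bar>" by (auto simp: abs_mult)
    moreover have "int m * 1 \<le> int m * \<bar>q $ j\<bar>"
      using \<open>q $ j \<noteq> 0\<close> by (intro mult_left_mono) auto
    ultimately have "int m \<le> \<bar>g $ j\<bar>" by simp
    then show "m \<in> {..nat \<bar>g $ j\<bar>}" by auto
  qed
  then have "finite M" by (rule finite_subset) simp
  moreover have "1 \<in> M" by (auto simp: M intro!: exI[of _ g])
  ultimately have "Max M \<in> M" by (intro Max_in) auto
  then obtain p where m0: "0 < Max M" and gp: "g = int (Max M) *s p" unfolding M by blast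
  have "\<bar>k\<bar> = 1" if pk: "p = k *s q" for k q
  proof -
    have "k \<noteq> 0" using assms gp pk by auto
    have "g = (int (Max M) * \<bar>k\<bar>) *s (sgn k *s q)"
      using gp pk by (simp add: vector_smult_assoc mult.assoc abs_mult_sgn mult.commute[of "\<bar>k\<bar>"]
          mult.left_commute)
    then have "nat (int (Max M) * \<bar>k\<bar>) \<in> M" using m0 \<open>k \<noteq> 0\<close> unfolding M
      by (auto intro!: exI[of _ "sgn k *s q"])
    then have "nat (int (Max M) * \<bar>k\<bar>) \<le> Max M" using \<open>finite M\<close> by simp
    then have "int (Max M) * \<bar>k\<bar> \<le> int (Max M)" by linarith
    then have "\<bar>k\<bar> \<le> 1" using m0 by (simp add: mult_le_cancel_left1)
    then show ?thesis using \<open>k \<noteq> 0\<close> by linarith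
  qed
  then have "primitive p" using assms gp unfolding primitive_def by auto
  moreover have "0 < int (Max M)" using m0 by simp
  ultimately show ?thesis using that gp by blast
qed

lemma strongly_convex_nonneg_sum_eq_0:
  assumes "strongly_convex (cone_hullQ S)" "finite F" "F \<subseteq> S" "\<forall>v\<in>F. 0 \<le> c v"
    and "(\<Sum>v\<in>F. c v *s v) = 0" "h \<in> F" "0 < c h"
  shows "h = 0"
proof -
  define y where "y = (\<Sum>v\<in>F - {h}. c v *s v)"
  have "c h *s h + y = 0" using assms(2,5,6) by (simp add: y_def sum.remove)
  then have "y = - (c h *s h)" by (simp add: eq_neg_iff_add_eq_0 add.commute)
  then have "- h = (1 / c h) *s y" using assms(7) by (simp add: vec_eq_iff)
  moreover have "y \<in> cone_hullQ S"
    unfolding y_def using assms(2-4) by (intro cone_hullQ_sum cone_hullQ_smult cone_hullQ_inc) auto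
  ultimately have "- h \<in> cone_hullQ S" using assms(7) by (simp add: cone_hullQ_smult)
  moreover have "h \<in> cone_hullQ S" using assms(3,6) by (auto intro: cone_hullQ_inc)
  ultimately show ?thesis using assms(1) unfolding strongly_convex_def by (metis IntI image_eqI minus_minus singletonD)
qed

section \<open>Ray generators of a strongly convex cone\<close>

lemma projected_dependence_redundant:
  fixes W :: "(rat^'n::finite) set"
  assumes sc: "strongly_convex (cone_hullQ W)" and "finite W" "0 \<notin> W" "w \<in> W" "w $ j \<noteq> 0"
    and l: "\<forall>h\<in>W - {w}. 0 \<le> l h" "\<exists>h\<in>W - {w}. 0 < l h"
    and dep: "\<forall>i. (\<Sum>h\<in>W - {w}. l h * (h $ i - h $ j / w $ j * w $ i)) = 0"
  shows "w \<in> cone_hullQ (W - {w})"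
proof -
  define H where "H = W - {w}"
  have "finite H" using assms(2) by (simp add: H_def)
  define y where "y = (\<Sum>h\<in>H. l h *s h)"
  define t where "t = y $ j / w $ j"
  have "y $ i - t * w $ i = (\<Sum>h\<in>H. l h * (h $ i - h $ j / w $ j * w $ i))" for i
    unfolding t_def y_def
    by (simp add: sum_subtractf right_diff_distrib sum_distrib_right sum_divide_distrib mult.assoc)
  then have y: "y = t *s w" using dep by (simp add: vec_eq_iff H_def)
  have "y \<in> cone_hullQ H"
    unfolding y_def using l(1) \<open>finite H\<close> H_def
    by (intro cone_hullQ_sum cone_hullQ_smult cone_hullQ_inc) auto
  \<comment> \<open>Otherwise y + (-t) w = 0 is a nonnegative combination of generators with a positive
    coefficient, which strong convexity forbids.\<close>
  have "0 < t"
  proof (rule ccontr)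
    assume "\<not> 0 < t"
    define c where "c v = (if v = w then - t else l v)" for v
    have W: "W = insert w H" "w \<notin> H" using assms(4) by (auto simp: H_def)
    have "(\<Sum>h\<in>H. c h *s h) = y" unfolding y_def by (rule sum.cong) (auto simp: c_def W(2))
    then have "(\<Sum>v\<in>W. c v *s v) = 0" using \<open>finite H\<close> by (simp add: W y c_def)
    moreover have "\<forall>v\<in>W. 0 \<le> c v" using l(1) \<open>\<not> 0 < t\<close> by (auto simp: c_def)
    moreover obtain h where "h \<in> H" "0 < l h" using l(2) H_def by blast
    moreover have "h \<in> W" "c h = l h" using \<open>h \<in> H\<close> W by (auto simp: c_def)
    ultimately have "h = 0"
      using strongly_convex_nonneg_sum_eq_0[OF sc assms(2) order_refl] by simp
    then show False using \<open>h \<in> H\<close> assms(3) H_def by blast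
  qed
  then have "w = (1 / t) *s y" by (simp add: y vector_smult_assoc)
  then show ?thesis using \<open>y \<in> cone_hullQ H\<close> \<open>0 < t\<close> by (simp add: cone_hullQ_smult H_def)
qed

lemma irredundant_generator_exposed:
  fixes W :: "(rat^'n::finite) set"
  assumes sc: "strongly_convex (cone_hullQ W)" and "finite W" "0 \<notin> W" "w \<in> W"
    and irr: "w \<notin> cone_hullQ (W - {w})"
  obtains v where "(\<Sum>i\<in>UNIV. w $ i * v i) = 0" "\<And>h. h \<in> W - {w} \<Longrightarrow> 0 < (\<Sum>i\<in>UNIV. h $ i * v i)"
proof -
  obtain j where j: "w $ j \<noteq> 0" using assms(3,4) by (metis vec_eq_iff zero_index)
  define \<pi> where "\<pi> h i = h $ i - h $ j / w $ j * w $ i" for h :: "rat^'n" and i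
  have "finite (W - {w})" using assms(2) by simp
  then have "(\<exists>v. \<forall>h\<in>W - {w}. 0 < (\<Sum>i\<in>UNIV. \<pi> h i * v i)) \<or>
      (\<exists>l. (\<forall>h\<in>W - {w}. 0 \<le> l h) \<and> (\<exists>h\<in>W - {w}. 0 < l h) \<and>
           (\<forall>i\<in>UNIV. (\<Sum>h\<in>W - {w}. l h * \<pi> h i) = 0))"
    by (intro gordan_alternative_indexed) simp_all
  moreover have False
    if "\<forall>h\<in>W - {w}. 0 \<le> l h" "\<exists>h\<in>W - {w}. 0 < l h" "\<forall>i\<in>UNIV. (\<Sum>h\<in>W - {w}. l h * \<pi> h i) = 0" for l
    using projected_dependence_redundant[OF sc assms(2-4) j that(1,2)] that(3) irr
    unfolding \<pi>_def by blast
  ultimately obtain v where v: "\<forall>h\<in>W - {w}. 0 < (\<Sum>i\<in>UNIV. \<pi> h i * v i)" by blast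
  define s where "s = (\<Sum>i\<in>UNIV. w $ i * v i)"
  define v' where "v' i = v i - (if i = j then s / w $ j else 0)" for i
  have shift: "(\<Sum>i\<in>UNIV. x $ i * v' i) = (\<Sum>i\<in>UNIV. \<pi> x i * v i)" for x
  proof -
    have "(\<Sum>i\<in>UNIV. x $ i * v' i) = (\<Sum>i\<in>UNIV. x $ i * v i - (if i = j then x $ j * s / w $ j else 0))"
      by (rule sum.cong) (auto simp: v'_def right_diff_distrib)
    also have "\<dots> = (\<Sum>i\<in>UNIV. x $ i * v i) - x $ j / w $ j * s"
      by (simp add: sum_subtractf)
    also have "\<dots> = (\<Sum>i\<in>UNIV. \<pi> x i * v i)"
      unfolding \<pi>_def s_def by (simp add: left_diff_distrib sum_subtractf sum_distrib_left mult.assoc)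
    finally show ?thesis .
  qed
  have "\<pi> w i = 0" for i using j by (simp add: \<pi>_def)
  then show ?thesis using that[of v'] v by (simp add: shift)
qed

lemma irredundant_generator_in_cone_ray_gens:
  fixes W :: "(rat^'n::finite) set"
  assumes sc: "strongly_convex (cone_hullQ W)" and "finite W" "W \<subseteq> range ofv" "0 \<notin> W" "w \<in> W"
    and irr: "w \<notin> cone_hullQ (W - {w})"
  shows "w \<in> cone_hullQ (ofv ` ray_gens (cone_hullQ W))"
proof -
  obtain v where v0: "(\<Sum>i\<in>UNIV. w $ i * v i) = 0"
    and vpos: "\<And>h. h \<in> W - {w} \<Longrightarrow> 0 < (\<Sum>i\<in>UNIV. h $ i * v i)"
    using irredundant_generator_exposed[OF sc assms(2,4,5) irr] by blast
  obtain d u where "0 < d" and u: "\<And>x. pairQ x u = of_int d * (\<Sum>i\<in>UNIV. x $ i * v i)"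
    using lattice_multiple_of_functional[of v] by blast
  have w0: "pairQ w u = 0" and pos: "\<And>h. h \<in> W - {w} \<Longrightarrow> 0 < pairQ h u"
    using v0 vpos \<open>0 < d\<close> by (simp_all add: u)
  obtain g where "w = ofv g" using assms(3,5) by blast
  then have "g \<noteq> 0" using assms(4,5) by (metis ofv_eq_0_iff)
  then obtain m p where "0 < m" "g = m *s p" and prim: "primitive p"
    by (rule nonzero_lattice_vector_primitive_multiple)
  then have wp: "w = of_int m *s ofv p" using \<open>w = ofv g\<close> by (simp add: ofv_smult)
  have "ofv p = (1 / of_int m) *s w" using wp \<open>0 < m\<close> by (simp add: vector_smult_assoc)
  then have "ofv p \<in> cone_hullQ W" "pairQ (ofv p) u = 0"
    using assms(5) \<open>0 < m\<close> w0 by (simp_all add: cone_hullQ_smult cone_hullQ_inc pairQ_smult_left)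
  moreover have "w \<in> cone_hullQ {ofv p}" using wp \<open>0 < m\<close> by (simp add: cone_hullQ_smult cone_hullQ_inc)
  moreover have "\<forall>x\<in>W. 0 \<le> pairQ x u" using w0 pos by (metis Diff_iff empty_iff insert_iff less_imp_le order_refl)
  moreover have "{x\<in>W. pairQ x u = 0} \<subseteq> {w}" using pos by fastforce
  ultimately have "is_face (cone_hullQ {ofv p}) (cone_hullQ W)"
    by (intro is_face_cone_hullQ_between[where u = u]) auto
  then have "p \<in> ray_gens (cone_hullQ W)" using prim by (simp add: ray_gens_def)
  then show ?thesis using wp \<open>0 < m\<close> by (simp add: cone_hullQ_smult cone_hullQ_inc)
qed

lemma cone_hullQ_subset_cone_ray_gens:
  fixes W :: "(rat^'n::finite) set"
  assumes "strongly_convex (cone_hullQ W)" "finite W" "W \<subseteq> range ofv"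
  shows "cone_hullQ W \<subseteq> cone_hullQ (ofv ` ray_gens (cone_hullQ W))"
  using assms
proof (induction "card W" arbitrary: W rule: less_induct)
  case less
  show ?case
  proof (cases "\<exists>w\<in>W. w \<in> cone_hullQ (W - {w})")
    case True
    then obtain w where w: "w \<in> W" "w \<in> cone_hullQ (W - {w})" by blast
    have "W \<subseteq> cone_hullQ (W - {w})" using w by (auto intro: cone_hullQ_inc)
    then have "cone_hullQ (W - {w}) = cone_hullQ W"
      using cone_hullQ_minimal cone_hullQ_mono[of "W - {w}" W] by blast
    moreover have "card (W - {w}) < card W" using less.prems(2) w(1) by (rule card_Diff1_less)
    ultimately show ?thesis using less.hyps[of "W - {w}"] less.prems by auto
  next
    case False
    then have "0 \<notin> W" using zero_in_cone_hullQ by blast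
    then have "W \<subseteq> cone_hullQ (ofv ` ray_gens (cone_hullQ W))"
      using irredundant_generator_in_cone_ray_gens[OF less.prems] False by blast
    then show ?thesis by (rule cone_hullQ_minimal)
  qed
qed

lemma ofv_ray_gens_mem: "p \<in> ray_gens \<sigma> \<Longrightarrow> ofv p \<in> \<sigma>"
  using cone_hullQ_inc[of "ofv p" "{ofv p}"] unfolding ray_gens_def is_face_def by blast

lemma cone_hullQ_ray_gens:
  assumes "rational_polyhedral_cone \<sigma>" "strongly_convex \<sigma>"
  shows "cone_hullQ (ofv ` ray_gens \<sigma>) = \<sigma>"
proof -
  obtain G where "finite G" and \<sigma>: "\<sigma> = cone_hullQ (ofv ` G)"
    using assms(1) unfolding rational_polyhedral_cone_def by blast
  then have "\<sigma> \<subseteq> cone_hullQ (ofv ` ray_gens \<sigma>)"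
    using cone_hullQ_subset_cone_ray_gens[of "ofv ` G"] assms(2) by auto
  moreover have "cone_hullQ (ofv ` ray_gens \<sigma>) \<subseteq> \<sigma>"
    unfolding \<sigma> by (rule cone_hullQ_minimal) (auto simp flip: \<sigma> intro: ofv_ray_gens_mem)
  ultimately show ?thesis by blast
qed

section \<open>Joining a face with rays\<close>

lemma is_face_join_by_dual_roots:
  fixes G :: "(int^'n::finite) set" and p e :: "'i \<Rightarrow> int^'n"
  assumes u: "\<forall>g\<in>G. 0 \<le> pairQ (ofv g) u"
    and \<gamma>: "\<gamma> = {x\<in>cone_hullQ (ofv ` G). pairQ x u = 0}"
    and "finite R" "p ` R \<subseteq> G"
    and dual: "\<forall>r\<in>R. \<forall>s\<in>R. pairZ (p s) (e r) = (if r = s then -1 else 0)"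
    and root: "\<forall>r\<in>R. \<forall>g\<in>G - p ` R. 0 \<le> pairZ g (e r)"
    and perp: "\<forall>r\<in>R. e r \<in> perp \<gamma>"
  shows "is_face (cone_hullQ (\<gamma> \<union> ofv ` p ` R)) (cone_hullQ (ofv ` G))"
proof -
  define c where "c r = pairZ (p r) u" for r
  define u' where "u' = u + (\<Sum>r\<in>R. c r *s e r)"
  have u': "pairQ x u' = pairQ x u + (\<Sum>r\<in>R. of_int (c r) * pairQ x (e r))" for x
    unfolding u'_def using \<open>finite R\<close> by (simp add: pairQ_add_right pairQ_sum_right pairQ_smult_right)
  have on_rays: "pairQ (ofv (p s)) u' = 0" if "s \<in> R" for s
  proof -
    have "(\<Sum>r\<in>R. of_int (c r) * pairQ (ofv (p s)) (e r)) = (\<Sum>r\<in>R. if r = s then - of_int (c s) else 0)"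
      using dual that by (intro sum.cong) (auto simp: pairQ_ofv)
    then show ?thesis using \<open>finite R\<close> that by (simp add: u' pairQ_ofv c_def)
  qed
  have off_rays: "pairQ (ofv g) u \<le> pairQ (ofv g) u'" if "g \<in> G - p ` R" for g
  proof -
    have "0 \<le> c r" if "r \<in> R" for r
      using u that \<open>p ` R \<subseteq> G\<close> by (force simp: c_def pairQ_ofv)
    then show ?thesis using root \<open>g \<in> G - p ` R\<close> by (auto simp: u' pairQ_ofv intro!: sum_nonneg)
  qed
  have on_face: "pairQ x u' = 0" if "x \<in> \<gamma>" for x
    using that perp by (simp add: u' \<gamma> perp_def)
  show ?thesis
  proof (rule is_face_cone_hullQ_between[where u = u'])
    show "\<forall>w\<in>ofv ` G. 0 \<le> pairQ w u'"
      using on_rays off_rays u by (fastforce simp: image_iff)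
    show "{w\<in>ofv ` G. pairQ w u' = 0} \<subseteq> cone_hullQ (\<gamma> \<union> ofv ` p ` R)"
    proof (intro subsetI cone_hullQ_inc)
      fix w assume "w \<in> {w\<in>ofv ` G. pairQ w u' = 0}"
      then obtain g where g: "g \<in> G" "w = ofv g" "pairQ w u' = 0" by blast
      show "w \<in> \<gamma> \<union> ofv ` p ` R"
      proof (cases "g \<in> p ` R")
        case False
        then have "pairQ w u = 0" using off_rays[of g] u g by fastforce
        then show ?thesis using g by (auto simp: \<gamma> intro: cone_hullQ_inc)
      qed (use g in auto)
    qed
    show "\<gamma> \<union> ofv ` p ` R \<subseteq> {x\<in>cone_hullQ (ofv ` G). pairQ x u' = 0}"
      using on_face on_rays \<open>p ` R \<subseteq> G\<close> by (auto simp: \<gamma> intro!: cone_hullQ_inc)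
  qed
qed

theorem mainTheorem10:
  fixes \<sigma> \<tau> \<gamma> :: "(rat^'n::finite) set"
    and k :: nat and p e1 e2 :: "nat \<Rightarrow> int^'n"
  assumes "rational_polyhedral_cone \<sigma>" and "strongly_convex \<sigma>"
    and "regular_face_with_gens \<tau> \<sigma> k p"
    and "\<forall>r\<in>{1..k}. demazure_root \<sigma> (p r) (e1 r) \<and> demazure_root \<sigma> (p r) (e2 r)"
    and "\<forall>r\<in>{1..k}. \<forall>s\<in>{1..k}.
           pairZ (p s) (e1 r) = (if r = s then -1 else 0) \<and>
           pairZ (p s) (e2 r) = (if r = s then -1 else 0)"
    and "is_face \<gamma> \<sigma>"
    and "\<forall>r\<in>{1..k}. ofv (p r) \<notin> \<gamma> \<longrightarrow> e1 r \<in> perp \<gamma> \<or> e2 r \<in> perp \<gamma>"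
  shows "is_face (cone_hullQ (\<gamma> \<union> {ofv (p r) | r. r \<in> {1..k} \<and> ofv (p r) \<notin> \<gamma>})) \<sigma>"
proof -
  have \<sigma>: "cone_hullQ (ofv ` ray_gens \<sigma>) = \<sigma>" using assms(1,2) by (rule cone_hullQ_ray_gens)
  obtain u where u: "\<forall>x\<in>\<sigma>. 0 \<le> pairQ x u" and \<gamma>: "\<gamma> = {x\<in>\<sigma>. pairQ x u = 0}"
    using assms(6) unfolding is_face_def by blast
  define R where "R = {r\<in>{1..k}. ofv (p r) \<notin> \<gamma>}"
  define e where "e r = (if e1 r \<in> perp \<gamma> then e1 r else e2 r)" for r
  have "\<forall>r\<in>R. demazure_root \<sigma> (p r) (e r)" using assms(4) by (simp add: R_def e_def)
  then have "p ` R \<subseteq> ray_gens \<sigma>" "\<forall>r\<in>R. \<forall>g\<in>ray_gens \<sigma> - p ` R. 0 \<le> pairZ g (e r)"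
    by (auto simp: demazure_root_def)
  moreover have "\<forall>r\<in>R. \<forall>s\<in>R. pairZ (p s) (e r) = (if r = s then -1 else 0)"
    using assms(5) by (simp add: R_def e_def)
  moreover have "\<forall>r\<in>R. e r \<in> perp \<gamma>" using assms(7) by (auto simp: R_def e_def)
  moreover have "\<forall>g\<in>ray_gens \<sigma>. 0 \<le> pairQ (ofv g) u" using u ofv_ray_gens_mem by blast
  ultimately have "is_face (cone_hullQ (\<gamma> \<union> ofv ` p ` R)) \<sigma>"
    using is_face_join_by_dual_roots[of "ray_gens \<sigma>" u \<gamma> R p e] \<gamma> by (simp add: \<sigma> R_def)
  moreover have "{ofv (p r) | r. r \<in> {1..k} \<and> ofv (p r) \<notin> \<gamma>} = ofv ` p ` R" by (auto simp: R_def)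
  ultimately show ?thesis by simp
qed

end
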